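(* Let $f:2^V\to\mathbb{Z}_{\ge0}$ be a connectivity function, $T$ a branch decomposition of $f$, $r\in E(T)$, and $(r,C_1,C_2,C_3)$ a global $T$-improvement. Then for every $i\in\{1,2,3\}$ and every node $w\in V(T)$ it holds that $f(T_r[w]\cap C_i)\le f(T_r[w])$. Moreover, if $T_r[w]\cap C_i\neq\emptyset$, then $f(T_r[w]\cap C_i)=f(T_r[w])$ if and only if $T_r[w]\subseteq C_i$.
   Context: A connectivity function $f:2^V\to\mathbb{Z}_{\ge0}$ ($V$ finite) satisfies $f(\emptyset)=0$, $f(X)=f(V\setminus X)$, and $f(X\cup Y)+f(X\cap Y)\le f(X)+f(Y)$. A branch decomposition of $f$ is a tree $T$ whose nodes have degree 1 or 3 together with a bijection from $V$ to its leaves; elements of $V$ are identified with leaves. For an edge $uv$ of $T$, $T[uv]$ denotes the set of leaves closer to $u$ than to $v$. For an edge $r=uv$ and a node $w$, the $r$-subtree of $w$ consists of the nodes $x$ such that $w$ lies on the unique path from $x$ to the edge $r$ (including $w$), and $T_r[w]\subseteq V$ is the set of leaves in the $r$-subtree of $w$ (so $T_r[u]=T[uv]$, $T_r[v]=T[vu]$). For $W\subseteq V$, a $W$-improvement is a tripartition $(C_1,C_2,C_3)$ of $V$ (pairwise disjoint, possibly empty, union $V$) with $f(C_i)<f(W)/2$, $f(C_i\cap W)<f(W)$, $f(C_i\cap(V\setminus W))<f(W)$ for each $i$. Its width is $\max_i f(C_i)$, its sum-width is $\sum_i f(C_i)$, and its arity is the number of nonempty $C_i$. A $W$-improvement is minimum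 if it has minimum width among all $W$-improvements, subject to that minimum arity, and subject to those minimum sum-width. For $r=uv\in E(T)$ and $W=T[uv]$, a $T$-improvement on $r$ is a tuple $(r,C_1,C_2,C_3)$ where $(C_1,C_2,C_3)$ is a minimum $W$-improvement; it intersects a node $w$ if $T_r[w]$ intersects at least two of $C_1,C_2,C_3$. A global $T$-improvement is a $T$-improvement on $r$ that intersects the minimum number of nodes of $T$ among all $T$-improvements on $r$. *)

theory Defs
  imports Complex_Main
begin

definition connectivity_function :: "'a set \<Rightarrow> ('a set \<Rightarrow> nat) \<Rightarrow> bool" where
  "connectivity_function V f \<longleftrightarrow>
     finite V \<and> f {} = 0 \<and>
     (\<forall>X. X \<subseteq> V \<longrightarrow> f X = f (V - X)) \<and>
     (\<forall>X Y. X \<subseteq> V \<longrightarrow> Y \<subseteq> V \<longrightarrow> f (X \<union> Y) + f (X \<inter> Y) \<le> f X + f Y)"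

section \<open>Trees (undirected simple graphs given by node set N and edge set E of 2-sets)\<close>

definition adj :: "'n set set \<Rightarrow> 'n \<Rightarrow> 'n \<Rightarrow> bool" where
  "adj E x y \<longleftrightarrow> {x, y} \<in> E \<and> x \<noteq> y"

definition is_path :: "'n set \<Rightarrow> 'n set set \<Rightarrow> 'n list \<Rightarrow> 'n \<Rightarrow> 'n \<Rightarrow> bool" where
  "is_path N E p x y \<longleftrightarrow> p \<noteq> [] \<and> hd p = x \<and> last p = y \<and> set p \<subseteq> N \<and> distinct p \<and>
     (\<forall>i. Suc i < length p \<longrightarrow> adj E (p ! i) (p ! Suc i))"

definition is_tree :: "'n set \<Rightarrow> 'n set set \<Rightarrow> bool" where
  "is_tree N E \<longleftrightarrow> finite N \<and> N \<noteq> {} \<and>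
     (\<forall>e\<in>E. \<exists>x y. e = {x, y} \<and> x \<noteq> y \<and> x \<in> N \<and> y \<in> N) \<and>
     (\<forall>x\<in>N. \<forall>y\<in>N. \<exists>!p. is_path N E p x y)"

definition tree_path :: "'n set \<Rightarrow> 'n set set \<Rightarrow> 'n \<Rightarrow> 'n \<Rightarrow> 'n list" where
  "tree_path N E x y = (THE p. is_path N E p x y)"

definition tree_dist :: "'n set \<Rightarrow> 'n set set \<Rightarrow> 'n \<Rightarrow> 'n \<Rightarrow> nat" where
  "tree_dist N E x y = length (tree_path N E x y) - 1"

definition degree :: "'n set set \<Rightarrow> 'n \<Rightarrow> nat" where
  "degree E x = card {y. adj E x y}"

definition leaves :: "'n set \<Rightarrow> 'n set set \<Rightarrow> 'n set" where
  "leaves N E = {x \<in> N. degree E x = 1}"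

definition branch_decomposition :: "'a set \<Rightarrow> 'n set \<Rightarrow> 'n set set \<Rightarrow> ('a \<Rightarrow> 'n) \<Rightarrow> bool" where
  "branch_decomposition V N E lf \<longleftrightarrow> is_tree N E \<and>
     (\<forall>x\<in>N. degree E x = 1 \<or> degree E x = 3) \<and>
     bij_betw lf V (leaves N E)"

definition Tside :: "'a set \<Rightarrow> 'n set \<Rightarrow> 'n set set \<Rightarrow> ('a \<Rightarrow> 'n) \<Rightarrow> 'n \<Rightarrow> 'n \<Rightarrow> 'a set" where
  "Tside V N E lf u v = {x \<in> V. tree_dist N E (lf x) u < tree_dist N E (lf x) v}"

definition path_to_edge :: "'n set \<Rightarrow> 'n set set \<Rightarrow> 'n \<Rightarrow> 'n \<Rightarrow> 'n \<Rightarrow> 'n list" where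
  "path_to_edge N E x u v =
     (if tree_dist N E x u < tree_dist N E x v then tree_path N E x u else tree_path N E x v)"

(* r-subtree of w, r = uv *)
definition rsubtree :: "'n set \<Rightarrow> 'n set set \<Rightarrow> 'n \<Rightarrow> 'n \<Rightarrow> 'n \<Rightarrow> 'n set" where
  "rsubtree N E u v w = {x \<in> N. w \<in> set (path_to_edge N E x u v)}"

definition Tr :: "'a set \<Rightarrow> 'n set \<Rightarrow> 'n set set \<Rightarrow> ('a \<Rightarrow> 'n) \<Rightarrow> 'n \<Rightarrow> 'n \<Rightarrow> 'n \<Rightarrow> 'a set" where
  "Tr V N E lf u v w = {x \<in> V. lf x \<in> rsubtree N E u v w}"

definition tripartition :: "'a set \<Rightarrow> (nat \<Rightarrow> 'a set) \<Rightarrow> bool" where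
  "tripartition V C \<longleftrightarrow> C 1 \<inter> C 2 = {} \<and> C 1 \<inter> C 3 = {} \<and> C 2 \<inter> C 3 = {} \<and>
     C 1 \<union> C 2 \<union> C 3 = V"

definition improvement :: "'a set \<Rightarrow> ('a set \<Rightarrow> nat) \<Rightarrow> 'a set \<Rightarrow> (nat \<Rightarrow> 'a set) \<Rightarrow> bool" where
  "improvement V f W C \<longleftrightarrow> tripartition V C \<and>
     (\<forall>i\<in>{1,2,3}. real (f (C i)) < real (f W) / 2 \<and>
                  f (C i \<inter> W) < f W \<and> f (C i \<inter> (V - W)) < f W)"

definition width :: "('a set \<Rightarrow> nat) \<Rightarrow> (nat \<Rightarrow> 'a set) \<Rightarrow> nat" where
  "width f C = max (f (C 1)) (max (f (C 2)) (f (C 3)))"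

definition sum_width :: "('a set \<Rightarrow> nat) \<Rightarrow> (nat \<Rightarrow> 'a set) \<Rightarrow> nat" where
  "sum_width f C = f (C 1) + f (C 2) + f (C 3)"

definition arity :: "(nat \<Rightarrow> 'a set) \<Rightarrow> nat" where
  "arity C = card {i \<in> {1,2,3::nat}. C i \<noteq> {}}"

definition min_improvement :: "'a set \<Rightarrow> ('a set \<Rightarrow> nat) \<Rightarrow> 'a set \<Rightarrow> (nat \<Rightarrow> 'a set) \<Rightarrow> bool" where
  "min_improvement V f W C \<longleftrightarrow> improvement V f W C \<and>
     (\<forall>D. improvement V f W D \<longrightarrow> width f C \<le> width f D) \<and>
     (\<forall>D. improvement V f W D \<and> width f D = width f C \<longrightarrow> arity C \<le> arity D) \<and>
     (\<forall>D. improvement V f W D \<and> width f D = width f C \<and> arity D = arity C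
          \<longrightarrow> sum_width f C \<le> sum_width f D)"

definition T_improvement :: "'a set \<Rightarrow> ('a set \<Rightarrow> nat) \<Rightarrow> 'n set \<Rightarrow> 'n set set \<Rightarrow> ('a \<Rightarrow> 'n)
     \<Rightarrow> 'n \<Rightarrow> 'n \<Rightarrow> (nat \<Rightarrow> 'a set) \<Rightarrow> bool" where
  "T_improvement V f N E lf u v C \<longleftrightarrow> {u, v} \<in> E \<and> min_improvement V f (Tside V N E lf u v) C"

definition intersects_node :: "'a set \<Rightarrow> 'n set \<Rightarrow> 'n set set \<Rightarrow> ('a \<Rightarrow> 'n)
     \<Rightarrow> 'n \<Rightarrow> 'n \<Rightarrow> (nat \<Rightarrow> 'a set) \<Rightarrow> 'n \<Rightarrow> bool" where
  "intersects_node V N E lf u v C w \<longleftrightarrow>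
     card {i \<in> {1,2,3::nat}. Tr V N E lf u v w \<inter> C i \<noteq> {}} \<ge> 2"

definition num_intersected :: "'a set \<Rightarrow> 'n set \<Rightarrow> 'n set set \<Rightarrow> ('a \<Rightarrow> 'n)
     \<Rightarrow> 'n \<Rightarrow> 'n \<Rightarrow> (nat \<Rightarrow> 'a set) \<Rightarrow> nat" where
  "num_intersected V N E lf u v C = card {w \<in> N. intersects_node V N E lf u v C w}"

definition global_T_improvement :: "'a set \<Rightarrow> ('a set \<Rightarrow> nat) \<Rightarrow> 'n set \<Rightarrow> 'n set set \<Rightarrow> ('a \<Rightarrow> 'n)
     \<Rightarrow> 'n \<Rightarrow> 'n \<Rightarrow> (nat \<Rightarrow> 'a set) \<Rightarrow> bool" where
  "global_T_improvement V f N E lf u v C \<longleftrightarrow> T_improvement V f N E lf u v C \<and>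
     (\<forall>D. T_improvement V f N E lf u v D \<longrightarrow>
          num_intersected V N E lf u v C \<le> num_intersected V N E lf u v D)"

end

theory Submission
  imports Defs
begin

text \<open>Suppose \<open>X = T\<^sub>r[w]\<close> meets \<open>C\<^sub>i\<close>, is not contained in it, and
  \<open>f (X \<inter> C\<^sub>i) \<ge> f X\<close>. Since \<open>X\<close> lies on one side of \<open>r\<close>, submodularity and
  posimodularity show that moving a set \<open>Y \<subseteq> X\<close> with \<open>f Y \<le> f (Y \<inter> C\<^sub>i)\<close> and
  \<open>f Y \<le> f (Y - C\<^sub>j)\<close> for all \<open>j \<noteq> i\<close> into \<open>C\<^sub>i\<close> yields an improvement that is
  nowhere worse, hence again minimum; in particular \<open>f (C\<^sub>i)\<close> cannot drop, which forces
  \<open>f (Y \<inter> C\<^sub>i) = f Y\<close>. For \<open>Y = X - C\<^sub>j\<close> this rules out \<open>f (X - C\<^sub>j) < f X\<close>.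
  Then \<open>Y = X\<close> qualifies, and moving it gives a minimum improvement which, because the
  sets \<open>T\<^sub>r[\<cdot>]\<close> form a laminar family, intersects every node the old one did except
  \<open>w\<close>, contradicting globality.\<close>

section \<open>Subtrees hanging from an edge\<close>

lemma is_path_endpoints:
  assumes "is_path N E p x y"
  shows "x \<in> N" "y \<in> N" "x \<in> set p" "y \<in> set p"
  using assms unfolding is_path_def by (auto dest: hd_in_set last_in_set)

lemma tree_path_is_path:
  assumes "is_tree N E" "x \<in> N" "y \<in> N"
  shows "is_path N E (tree_path N E x y) x y"
proof -
  have "\<exists>!p. is_path N E p x y" using assms unfolding is_tree_def by auto
  then show ?thesis unfolding tree_path_def by (rule theI')
qed

lemma tree_path_eqI:
  assumes "is_tree N E" "is_path N E p x y"
  shows "tree_path N E x y = p"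
proof -
  have "x \<in> N" "y \<in> N" by (rule is_path_endpoints[OF assms(2)])+
  then have "\<exists>!p. is_path N E p x y" using assms(1) unfolding is_tree_def by auto
  then show ?thesis unfolding tree_path_def using assms(2) by (rule the1_equality)
qed

lemma is_path_drop:
  assumes "is_path N E p x y" "i < length p"
  shows "is_path N E (drop i p) (p ! i) y"
  unfolding is_path_def
proof (intro conjI allI impI)
  show "drop i p \<noteq> []" "hd (drop i p) = p ! i" using assms(2) by (simp_all add: hd_drop_conv_nth)
  show "last (drop i p) = y" "distinct (drop i p)" using assms unfolding is_path_def by simp_all
  show "set (drop i p) \<subseteq> N" using assms(1) set_drop_subset unfolding is_path_def by fast
  fix m assume m: "Suc m < length (drop i p)"
  then have "adj E (p ! (i + m)) (p ! Suc (i + m))" using assms(1) unfolding is_path_def by simp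
  then show "adj E (drop i p ! m) (drop i p ! Suc m)" using m by simp
qed

lemma is_path_take:
  assumes "is_path N E p x y" "i < length p"
  shows "is_path N E (take (Suc i) p) x (p ! i)"
  unfolding is_path_def
proof (intro conjI allI impI)
  show "take (Suc i) p \<noteq> []" "last (take (Suc i) p) = p ! i"
    using assms(2) by (auto simp: take_Suc_conv_app_nth)
  show "hd (take (Suc i) p) = x" "distinct (take (Suc i) p)"
    using assms unfolding is_path_def by simp_all
  show "set (take (Suc i) p) \<subseteq> N" using assms(1) set_take_subset unfolding is_path_def by fast
  fix m assume "Suc m < length (take (Suc i) p)"
  then show "adj E (take (Suc i) p ! m) (take (Suc i) p ! Suc m)"
    using assms(1) unfolding is_path_def by auto
qed

lemma is_path_snoc:
  assumes "is_path N E p x y" "adj E y z" "z \<in> N" "z \<notin> set p"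
  shows "is_path N E (p @ [z]) x z"
  unfolding is_path_def
proof (intro conjI allI impI)
  have ne: "p \<noteq> []" and last: "last p = y" using assms(1) unfolding is_path_def by auto
  show "p @ [z] \<noteq> []" "last (p @ [z]) = z" by simp_all
  show "hd (p @ [z]) = x" "set (p @ [z]) \<subseteq> N" "distinct (p @ [z])"
    using ne assms unfolding is_path_def by auto
  fix i assume i: "Suc i < length (p @ [z])"
  show "adj E ((p @ [z]) ! i) ((p @ [z]) ! Suc i)"
  proof (cases "Suc i < length p")
    case True
    then show ?thesis using assms(1) unfolding is_path_def by (simp add: nth_append)
  next
    case False
    then have "i = length p - 1" "Suc i = length p" using i ne by auto
    then have "(p @ [z]) ! i = y" "(p @ [z]) ! Suc i = z"
      using ne last by (auto simp: nth_append last_conv_nth)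
    then show ?thesis using assms(2) by simp
  qed
qed

lemma adj_sym: "adj E x y \<Longrightarrow> adj E y x"
  unfolding adj_def by (auto simp: insert_commute)

lemma tree_path_adj_cases:
  assumes T: "is_tree N E" and a: "a \<in> N" and b: "b \<in> N" and ab: "adj E a b" and y: "y \<in> N"
  shows "(tree_path N E y b = tree_path N E y a @ [b] \<and> b \<notin> set (tree_path N E y a)) \<or>
         (tree_path N E y a = tree_path N E y b @ [a] \<and> a \<notin> set (tree_path N E y b))"
proof (cases "b \<in> set (tree_path N E y a)")
  case False
  then show ?thesis
    using tree_path_eqI[OF T is_path_snoc[OF tree_path_is_path[OF T y a] ab b False]] by blast
next
  case True
  let ?p = "tree_path N E y a"
  have P: "is_path N E ?p y a" by (rule tree_path_is_path[OF T y a])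
  from True obtain i where i: "i < length ?p" "?p ! i = b" by (auto simp: in_set_conv_nth)
  have yb: "tree_path N E y b = take (Suc i) ?p"
    using tree_path_eqI[OF T is_path_take[OF P i(1)]] i(2) by simp
  have "a \<notin> set (take (Suc i) ?p)"
  proof
    assume "a \<in> set (take (Suc i) ?p)"
    then obtain m where "m < length (take (Suc i) ?p)" "take (Suc i) ?p ! m = a"
      by (auto simp: in_set_conv_nth)
    then have m: "m \<le> i" "m < length ?p" "?p ! m = a" by auto
    have "?p \<noteq> []" "last ?p = a" "distinct ?p" using P unfolding is_path_def by auto
    then have "m = length ?p - 1"
      using m by (metis diff_less last_conv_nth length_greater_0_conv nth_eq_iff_index_eq zero_less_one)
    then have "i = m" using i(1) m(1) by simp
    then show False using i(2) m(3) ab unfolding adj_def by auto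
  qed
  then have a_notin: "a \<notin> set (tree_path N E y b)" using yb by simp
  have "is_path N E (tree_path N E y b @ [a]) y a"
    by (rule is_path_snoc[OF tree_path_is_path[OF T y b] adj_sym[OF ab] a a_notin])
  then show ?thesis using tree_path_eqI[OF T] a_notin by blast
qed

definition closer :: "'n set \<Rightarrow> 'n set set \<Rightarrow> 'n \<Rightarrow> 'n \<Rightarrow> 'n \<Rightarrow> bool" where
  "closer N E y u v \<longleftrightarrow> tree_dist N E y u < tree_dist N E y v"

lemma closer_iff_notin_tree_path:
  assumes T: "is_tree N E" and u: "u \<in> N" and v: "v \<in> N" and uv: "adj E u v" and y: "y \<in> N"
  shows "closer N E y u v \<longleftrightarrow> v \<notin> set (tree_path N E y u)"
    and "\<not> closer N E y u v \<longleftrightarrow> u \<notin> set (tree_path N E y v)"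
proof -
  have "tree_path N E y u \<noteq> []" "tree_path N E y v \<noteq> []"
    using tree_path_is_path[OF T y u] tree_path_is_path[OF T y v] unfolding is_path_def by auto
  moreover have "u \<in> set (tree_path N E y u)" "v \<in> set (tree_path N E y v)"
    using is_path_endpoints(4)[OF tree_path_is_path[OF T y u]]
      is_path_endpoints(4)[OF tree_path_is_path[OF T y v]] by auto
  ultimately show "closer N E y u v \<longleftrightarrow> v \<notin> set (tree_path N E y u)"
    and "\<not> closer N E y u v \<longleftrightarrow> u \<notin> set (tree_path N E y v)"
    using tree_path_adj_cases[OF T u v uv y] unfolding closer_def tree_dist_def by auto
qed

lemma path_to_edge_closer:
  "path_to_edge N E y u v = (if closer N E y u v then tree_path N E y u else tree_path N E y v)"
  unfolding path_to_edge_def closer_def by simp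

lemma path_to_edge_suffix:
  assumes T: "is_tree N E" and u: "u \<in> N" and v: "v \<in> N" and uv: "adj E u v" and y: "y \<in> N"
    and w: "w \<in> set (path_to_edge N E y u v)"
  shows "closer N E w u v \<longleftrightarrow> closer N E y u v"
    and "\<exists>i. path_to_edge N E w u v = drop i (path_to_edge N E y u v)"
proof -
  define t where "t = (if closer N E y u v then u else v)"
  define s where "s = (if closer N E y u v then v else u)"
  have t: "t \<in> N" using u v t_def by simp
  have pe_y: "path_to_edge N E y u v = tree_path N E y t"
    unfolding t_def by (simp add: path_to_edge_closer)
  let ?p = "tree_path N E y t"
  have P: "is_path N E ?p y t" by (rule tree_path_is_path[OF T y t])
  from w pe_y obtain i where i: "i < length ?p" "?p ! i = w" by (auto simp: in_set_conv_nth)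
  have Pw: "is_path N E (drop i ?p) w t" using is_path_drop[OF P i(1)] i(2) by simp
  have wN: "w \<in> N" using is_path_endpoints[OF Pw] by simp
  have tw: "tree_path N E w t = drop i ?p" by (rule tree_path_eqI[OF T Pw])
  have "s \<notin> set ?p"
    using closer_iff_notin_tree_path[OF T u v uv y] unfolding s_def t_def by auto
  then have "s \<notin> set (tree_path N E w t)" using tw by (metis in_set_dropD)
  then show same: "closer N E w u v \<longleftrightarrow> closer N E y u v"
    using closer_iff_notin_tree_path[OF T u v uv wN] unfolding s_def t_def
    by (cases "closer N E y u v") auto
  have "path_to_edge N E w u v = tree_path N E w t"
    using same unfolding t_def by (simp add: path_to_edge_closer)
  then show "\<exists>i. path_to_edge N E w u v = drop i (path_to_edge N E y u v)"
    using tw pe_y by auto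
qed

lemma in_path_to_edge_self:
  assumes "is_tree N E" "u \<in> N" "v \<in> N" "w \<in> N"
  shows "w \<in> set (path_to_edge N E w u v)"
  using is_path_endpoints(3)[OF tree_path_is_path[OF assms(1,4,2)]]
    is_path_endpoints(3)[OF tree_path_is_path[OF assms(1,4,3)]]
  by (simp add: path_to_edge_closer)

lemma rsubtree_mono:
  assumes T: "is_tree N E" and u: "u \<in> N" and v: "v \<in> N" and uv: "adj E u v"
    and w: "w \<in> set (path_to_edge N E w' u v)"
  shows "rsubtree N E u v w' \<subseteq> rsubtree N E u v w"
proof
  fix z assume "z \<in> rsubtree N E u v w'"
  then have z: "z \<in> N" "w' \<in> set (path_to_edge N E z u v)" unfolding rsubtree_def by auto
  then obtain k where "path_to_edge N E w' u v = drop k (path_to_edge N E z u v)"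
    using path_to_edge_suffix(2)[OF T u v uv] by blast
  then have "w \<in> set (path_to_edge N E z u v)" using w by (metis in_set_dropD)
  then show "z \<in> rsubtree N E u v w" using z unfolding rsubtree_def by auto
qed

text \<open>Two nodes on a common path to the edge are comparable, since both paths to the edge are
  suffixes of that path.\<close>

lemma rsubtree_laminar:
  assumes T: "is_tree N E" and u: "u \<in> N" and v: "v \<in> N" and uv: "adj E u v"
    and w1: "w1 \<in> N" and w2: "w2 \<in> N"
  shows "rsubtree N E u v w1 \<subseteq> rsubtree N E u v w2 \<or> rsubtree N E u v w2 \<subseteq> rsubtree N E u v w1
    \<or> rsubtree N E u v w1 \<inter> rsubtree N E u v w2 = {}"
proof (cases "rsubtree N E u v w1 \<inter> rsubtree N E u v w2 = {}")
  case False
  then obtain z where z: "z \<in> N" "w1 \<in> set (path_to_edge N E z u v)" "w2 \<in> set (path_to_edge N E z u v)"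
    unfolding rsubtree_def by auto
  let ?p = "path_to_edge N E z u v"
  obtain i j where i: "path_to_edge N E w1 u v = drop i ?p" and j: "path_to_edge N E w2 u v = drop j ?p"
    using path_to_edge_suffix(2)[OF T u v uv z(1) z(2)] path_to_edge_suffix(2)[OF T u v uv z(1) z(3)]
    by blast
  have "w1 \<in> set (drop i ?p)" "w2 \<in> set (drop j ?p)"
    using in_path_to_edge_self[OF T u v w1] in_path_to_edge_self[OF T u v w2] i j by auto
  then have "w2 \<in> set (path_to_edge N E w1 u v) \<or> w1 \<in> set (path_to_edge N E w2 u v)"
    using i j set_drop_subset_set_drop[of i j ?p] set_drop_subset_set_drop[of j i ?p]
    by (cases "i \<le> j") auto
  then show ?thesis using rsubtree_mono[OF T u v uv] by blast
qed simp

lemma Tr_laminar: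
  assumes "is_tree N E" "u \<in> N" "v \<in> N" "adj E u v" "w1 \<in> N" "w2 \<in> N"
  shows "Tr V N E lf u v w1 \<subseteq> Tr V N E lf u v w2 \<or> Tr V N E lf u v w2 \<subseteq> Tr V N E lf u v w1
    \<or> Tr V N E lf u v w1 \<inter> Tr V N E lf u v w2 = {}"
  using rsubtree_laminar[OF assms] unfolding Tr_def by auto

lemma Tr_subset_Tside_or_compl:
  assumes T: "is_tree N E" and u: "u \<in> N" and v: "v \<in> N" and uv: "adj E u v" and w: "w \<in> N"
  shows "Tr V N E lf u v w \<subseteq> Tside V N E lf u v \<or> Tr V N E lf u v w \<subseteq> V - Tside V N E lf u v"
proof -
  have "closer N E (lf x) u v \<longleftrightarrow> closer N E w u v" if "x \<in> Tr V N E lf u v w" for x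
    using that path_to_edge_suffix(1)[OF T u v uv] unfolding Tr_def rsubtree_def by auto
  then show ?thesis unfolding Tside_def closer_def Tr_def by auto
qed

lemma tree_edge_adj:
  assumes "is_tree N E" "{u, v} \<in> E"
  shows "u \<in> N" "v \<in> N" "adj E u v"
  using assms unfolding is_tree_def adj_def by (auto simp: doubleton_eq_iff)

section \<open>Moving a set into one part of an improvement\<close>

lemma connectivity_function_submodular:
  assumes "connectivity_function V f" "X \<subseteq> V" "Y \<subseteq> V"
  shows "f (X \<union> Y) + f (X \<inter> Y) \<le> f X + f Y"
  using assms unfolding connectivity_function_def by blast

lemma connectivity_function_compl:
  assumes "connectivity_function V f" "X \<subseteq> V"
  shows "f (V - X) = f X"
  using assms unfolding connectivity_function_def by metis

lemma connectivity_function_posimodular: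
  assumes cf: "connectivity_function V f" and A: "A \<subseteq> V" and B: "B \<subseteq> V"
  shows "f (A - B) + f (B - A) \<le> f A + f B"
proof -
  have "f (A \<union> (V - B)) + f (A \<inter> (V - B)) \<le> f A + f (V - B)"
    by (rule connectivity_function_submodular[OF cf A]) auto
  moreover have "A \<union> (V - B) = V - (B - A)" "A \<inter> (V - B) = A - B" using A by auto
  moreover have "f (V - (B - A)) = f (B - A)" "f (V - B) = f B"
    using connectivity_function_compl[OF cf, of "B - A"] connectivity_function_compl[OF cf B] B
    by auto
  ultimately show ?thesis by simp
qed

lemma connectivity_function_Un_Int_le:
  assumes cf: "connectivity_function V f" and A: "A \<subseteq> V" and Y: "Y \<subseteq> V"
    and R: "Y \<subseteq> R \<or> Y \<inter> R = {}" and le: "f Y \<le> f (A \<inter> Y)"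
  shows "f ((A \<union> Y) \<inter> R) \<le> f (A \<inter> R)"
proof (cases "Y \<subseteq> R")
  case True
  have "f ((A \<inter> R) \<union> Y) + f ((A \<inter> R) \<inter> Y) \<le> f (A \<inter> R) + f Y"
    using connectivity_function_submodular[OF cf _ Y] A by blast
  moreover have "(A \<inter> R) \<inter> Y = A \<inter> Y" "(A \<union> Y) \<inter> R = (A \<inter> R) \<union> Y" using True by auto
  ultimately show ?thesis using le by simp
next
  case False
  then have "(A \<union> Y) \<inter> R = A \<inter> R" using R by auto
  then show ?thesis by simp
qed

lemma connectivity_function_Diff_Int_le:
  assumes cf: "connectivity_function V f" and A: "A \<subseteq> V" and Y: "Y \<subseteq> V"
    and R: "Y \<subseteq> R \<or> Y \<inter> R = {}" and le: "f Y \<le> f (Y - A)"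
  shows "f ((A - Y) \<inter> R) \<le> f (A \<inter> R)"
proof (cases "Y \<subseteq> R")
  case True
  have "f ((A \<inter> R) - Y) + f (Y - (A \<inter> R)) \<le> f (A \<inter> R) + f Y"
    using connectivity_function_posimodular[OF cf _ Y] A by blast
  moreover have "Y - (A \<inter> R) = Y - A" "(A - Y) \<inter> R = (A \<inter> R) - Y" using True by auto
  ultimately show ?thesis using le by simp
next
  case False
  then have "(A - Y) \<inter> R = A \<inter> R" using R by auto
  then show ?thesis by simp
qed

definition move_into :: "(nat \<Rightarrow> 'a set) \<Rightarrow> nat \<Rightarrow> 'a set \<Rightarrow> nat \<Rightarrow> 'a set" where
  "move_into C i Y = (\<lambda>n. if n = i then C i \<union> Y else C n - Y)"

lemma tripartition_move_into:
  assumes "tripartition V C" "i \<in> {1,2,3}" "Y \<subseteq> V"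
  shows "tripartition V (move_into C i Y)"
  using assms unfolding tripartition_def move_into_def by auto

lemma tripartition_subset:
  assumes "tripartition V C" "n \<in> {1,2,3}"
  shows "C n \<subseteq> V"
  using assms unfolding tripartition_def by auto

lemma tripartition_disjoint:
  assumes "tripartition V C" "n \<in> {1,2,3}" "m \<in> {1,2,3}" "n \<noteq> m"
  shows "C n \<inter> C m = {}"
  using assms unfolding tripartition_def by auto

lemma tripartition_cover:
  assumes "tripartition V C" "x \<in> V"
  obtains n where "n \<in> {1,2,3}" "x \<in> C n"
  using assms unfolding tripartition_def by auto

lemma improvement_move_into:
  assumes cf: "connectivity_function V f" and imp: "improvement V f W C"
    and Y: "Y \<subseteq> V" and side: "Y \<subseteq> W \<or> Y \<subseteq> V - W" and i: "i \<in> {1,2,3}"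
    and le_i: "f Y \<le> f (C i \<inter> Y)"
    and le_other: "\<forall>n\<in>{1,2,3}. n \<noteq> i \<longrightarrow> f Y \<le> f (Y - C n)"
  shows "improvement V f W (move_into C i Y)"
    and "\<forall>n\<in>{1,2,3}. f (move_into C i Y n) \<le> f (C n)"
proof -
  have tri: "tripartition V C" using imp unfolding improvement_def by blast
  have le_R: "f (move_into C i Y n \<inter> R) \<le> f (C n \<inter> R)"
    if n: "n \<in> {1,2,3}" and R: "Y \<subseteq> R \<or> Y \<inter> R = {}" for n R
  proof (cases "n = i")
    case True
    then show ?thesis using connectivity_function_Un_Int_le[OF cf tripartition_subset[OF tri i] Y R]
        le_i unfolding move_into_def by (simp add: Int_commute)
  next
    case False
    then have "f Y \<le> f (Y - C n)" using le_other n by blast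
    then show ?thesis using connectivity_function_Diff_Int_le[OF cf tripartition_subset[OF tri n] Y R]
        False unfolding move_into_def by simp
  qed
  have sides: "Y \<subseteq> V \<or> Y \<inter> V = {}" "Y \<subseteq> W \<or> Y \<inter> W = {}" "Y \<subseteq> V - W \<or> Y \<inter> (V - W) = {}"
    using Y side by auto
  have "move_into C i Y n \<inter> V = move_into C i Y n" "C n \<inter> V = C n" if "n \<in> {1,2,3}" for n
    using that Y tripartition_subset[OF tri] i unfolding move_into_def by auto
  then show le: "\<forall>n\<in>{1,2,3}. f (move_into C i Y n) \<le> f (C n)"
    using le_R[OF _ sides(1)] by metis
  show "improvement V f W (move_into C i Y)"
    unfolding improvement_def
  proof (intro conjI ballI)
    show "tripartition V (move_into C i Y)" by (rule tripartition_move_into[OF tri i Y])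
    fix n :: nat assume n: "n \<in> {1,2,3}"
    have "real (f (C n)) < real (f W) / 2" "f (C n \<inter> W) < f W" "f (C n \<inter> (V - W)) < f W"
      using imp n unfolding improvement_def by auto
    moreover have "real (f (move_into C i Y n)) \<le> real (f (C n))" using bspec[OF le n] by simp
    ultimately show "real (f (move_into C i Y n)) < real (f W) / 2"
      "f (move_into C i Y n \<inter> W) < f W" "f (move_into C i Y n \<inter> (V - W)) < f W"
      using le_R[OF n sides(2)] le_R[OF n sides(3)] by linarith+
  qed
qed

lemma min_improvement_if_dominated:
  assumes min: "min_improvement V f W C" and imp: "improvement V f W D"
    and le: "\<forall>n\<in>{1,2,3}. f (D n) \<le> f (C n)"
    and parts: "\<forall>n\<in>{1,2,3}. D n \<noteq> {} \<longrightarrow> C n \<noteq> {}"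
  shows "min_improvement V f W D" and "\<forall>n\<in>{1,2,3}. f (D n) = f (C n)"
proof -
  have "width f D \<le> width f C" using le unfolding width_def by (auto intro!: max.mono)
  moreover have "width f C \<le> width f D" using min imp unfolding min_improvement_def by blast
  ultimately have width: "width f D = width f C" by simp
  have "arity D \<le> arity C" unfolding arity_def by (rule card_mono) (use parts in auto)
  moreover have "arity C \<le> arity D" using min imp width unfolding min_improvement_def by simp
  ultimately have arity: "arity D = arity C" by simp
  have "sum_width f D \<le> sum_width f C" using le unfolding sum_width_def by (simp add: add_mono)
  moreover have "sum_width f C \<le> sum_width f D"
    using min imp width arity unfolding min_improvement_def by simp
  ultimately have sum: "sum_width f D = sum_width f C" by simp
  then show "\<forall>n\<in>{1,2,3}. f (D n) = f (C n)" using le unfolding sum_width_def by auto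
  show "min_improvement V f W D"
    unfolding min_improvement_def
  proof (intro conjI allI impI)
    fix D' assume "improvement V f W D'"
    then show "width f D \<le> width f D'" using min width unfolding min_improvement_def by simp
  next
    fix D' assume "improvement V f W D' \<and> width f D' = width f D"
    then show "arity D \<le> arity D'" using min width arity unfolding min_improvement_def by simp
  next
    fix D' assume "improvement V f W D' \<and> width f D' = width f D \<and> arity D' = arity D"
    then show "sum_width f D \<le> sum_width f D'"
      using min width arity sum unfolding min_improvement_def by simp
  qed (rule imp)
qed

lemma min_improvement_move_into:
  assumes cf: "connectivity_function V f" and min: "min_improvement V f W C"
    and Y: "Y \<subseteq> V" and side: "Y \<subseteq> W \<or> Y \<subseteq> V - W" and i: "i \<in> {1,2,3}"
    and meets: "C i \<inter> Y \<noteq> {}" and le_i: "f Y \<le> f (C i \<inter> Y)"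
    and le_other: "\<forall>n\<in>{1,2,3}. n \<noteq> i \<longrightarrow> f Y \<le> f (Y - C n)"
  shows "min_improvement V f W (move_into C i Y)" and "f (C i \<inter> Y) = f Y"
proof -
  have imp: "improvement V f W C" using min unfolding min_improvement_def by blast
  note move = improvement_move_into[OF cf imp Y side i le_i le_other]
  have parts: "\<forall>n\<in>{1,2,3}. move_into C i Y n \<noteq> {} \<longrightarrow> C n \<noteq> {}"
    using meets unfolding move_into_def by auto
  note dominated = min_improvement_if_dominated[OF min move parts]
  show "min_improvement V f W (move_into C i Y)" by (rule dominated(1))
  have "C i \<subseteq> V" using tripartition_subset imp i unfolding improvement_def by blast
  then have "f (C i \<union> Y) + f (C i \<inter> Y) \<le> f (C i) + f Y"
    by (rule connectivity_function_submodular[OF cf _ Y])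
  moreover have "f (C i \<union> Y) = f (C i)"
    using bspec[OF dominated(2) i] unfolding move_into_def by simp
  ultimately show "f (C i \<inter> Y) = f Y" using le_i by simp
qed

text \<open>Otherwise moving \<open>Y - C j\<close> into \<open>C i\<close> would strictly lower \<open>f (C i)\<close>.\<close>

lemma min_improvement_Diff_part_ge:
  assumes cf: "connectivity_function V f" and min: "min_improvement V f W C"
    and Y: "Y \<subseteq> V" and side: "Y \<subseteq> W \<or> Y \<subseteq> V - W"
    and i: "i \<in> {1,2,3}" and j: "j \<in> {1,2,3}" "j \<noteq> i"
    and meets: "C i \<inter> Y \<noteq> {}" and le_i: "f Y \<le> f (C i \<inter> Y)"
  shows "f Y \<le> f (Y - C j)"
proof (rule ccontr)
  assume "\<not> f Y \<le> f (Y - C j)"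
  define Z where "Z = Y - C j"
  have less: "f Z < f (C i \<inter> Y)" using \<open>\<not> f Y \<le> f (Y - C j)\<close> le_i Z_def by simp
  have tri: "tripartition V C" using min unfolding min_improvement_def improvement_def by blast
  have CiZ: "C i \<inter> Z = C i \<inter> Y" using tripartition_disjoint[OF tri i j(1)] j(2) Z_def by auto
  have le_other: "f Z \<le> f (Z - C n)" if n: "n \<in> {1,2,3}" "n \<noteq> i" for n
  proof (cases "n = j")
    case True
    then show ?thesis using Z_def by simp
  next
    case False
    have "Z - C n \<subseteq> C i"
    proof
      fix x assume x: "x \<in> Z - C n"
      then obtain m where m: "m \<in> {1,2,3}" "x \<in> C m"
        using tripartition_cover[OF tri] Y Z_def by blast
      then have "m \<noteq> j" "m \<noteq> n" using x Z_def by auto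
      then have "m = i" using m(1) n i j False by auto
      then show "x \<in> C i" using m(2) by simp
    qed
    then have "Z - C n = C i \<inter> Y"
      using tripartition_disjoint[OF tri i n(1)] n(2) CiZ Z_def by auto
    then show ?thesis using less by simp
  qed
  have "\<forall>n\<in>{1,2,3}. n \<noteq> i \<longrightarrow> f Z \<le> f (Z - C n)" using le_other by blast
  moreover have "Z \<subseteq> V" "Z \<subseteq> W \<or> Z \<subseteq> V - W" using Y side Z_def by auto
  moreover have "f Z \<le> f (C i \<inter> Z)" "C i \<inter> Z \<noteq> {}" using less meets CiZ by simp_all
  ultimately have "f (C i \<inter> Z) = f Z"
    using min_improvement_move_into(2)[OF cf min] i by blast
  then show False using less CiZ by simp
qed

section \<open>Global improvements\<close>

definition parts_met :: "'a set \<Rightarrow> (nat \<Rightarrow> 'a set) \<Rightarrow> nat set" where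
  "parts_met Y C = {n \<in> {1,2,3}. Y \<inter> C n \<noteq> {}}"

lemma intersects_node_iff_parts_met:
  "intersects_node V N E lf u v C w \<longleftrightarrow> 2 \<le> card (parts_met (Tr V N E lf u v w) C)"
  unfolding intersects_node_def parts_met_def ..

lemma parts_met_move_into_subset:
  assumes "Y \<subseteq> X \<or> X \<subseteq> Y \<or> Y \<inter> X = {}" "\<not> Y \<subseteq> X" "X \<inter> C i \<noteq> {}"
  shows "parts_met Y (move_into C i X) \<subseteq> parts_met Y C"
  using assms unfolding parts_met_def move_into_def by auto

lemma card_parts_met_move_into_inside:
  assumes "Y \<subseteq> X"
  shows "card (parts_met Y (move_into C i X)) \<le> 1"
proof -
  have "parts_met Y (move_into C i X) \<subseteq> {i}"
    using assms unfolding parts_met_def move_into_def by auto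
  then have "card (parts_met Y (move_into C i X)) \<le> card {i}" by (rule card_mono[rotated]) simp
  then show ?thesis by simp
qed

lemma two_le_card_parts_met:
  assumes tri: "tripartition V C" and i: "i \<in> {1,2,3}" and X: "X \<subseteq> V"
    and meets: "X \<inter> C i \<noteq> {}" and not_sub: "\<not> X \<subseteq> C i"
  shows "2 \<le> card (parts_met X C)"
proof -
  obtain x where x: "x \<in> X" "x \<notin> C i" using not_sub by blast
  then obtain m where m: "m \<in> {1,2,3}" "x \<in> C m" using tripartition_cover[OF tri] X by blast
  have "{i, m} \<subseteq> parts_met X C" using i m x meets unfolding parts_met_def by auto
  moreover have "i \<noteq> m" using x m by auto
  ultimately show ?thesis using card_mono[of "parts_met X C" "{i, m}"] unfolding parts_met_def by simp
qed

text \<open>Moving a whole subtree \<open>T\<^sub>r[w]\<close> into one part separates no new node, by laminarity,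
  and stops separating \<open>w\<close>.\<close>

lemma num_intersected_move_into_less:
  assumes T: "is_tree N E" and u: "u \<in> N" and v: "v \<in> N" and uv: "adj E u v"
    and tri: "tripartition V C" and i: "i \<in> {1,2,3}" and w: "w \<in> N"
    and meets: "Tr V N E lf u v w \<inter> C i \<noteq> {}" and not_sub: "\<not> Tr V N E lf u v w \<subseteq> C i"
  shows "num_intersected V N E lf u v (move_into C i (Tr V N E lf u v w))
    < num_intersected V N E lf u v C"
proof -
  let ?X = "Tr V N E lf u v w"
  let ?D = "move_into C i ?X"
  let ?S = "\<lambda>C. {w' \<in> N. intersects_node V N E lf u v C w'}"
  have "?S ?D \<subseteq> ?S C"
  proof
    fix w' assume "w' \<in> ?S ?D"
    then have w': "w' \<in> N" and met: "2 \<le> card (parts_met (Tr V N E lf u v w') ?D)"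
      by (auto simp: intersects_node_iff_parts_met)
    have "\<not> Tr V N E lf u v w' \<subseteq> ?X"
    proof
      assume "Tr V N E lf u v w' \<subseteq> ?X"
      then have "card (parts_met (Tr V N E lf u v w') ?D) \<le> 1" by (rule card_parts_met_move_into_inside)
      then show False using met by simp
    qed
    with Tr_laminar[OF T u v uv w' w]
    have "parts_met (Tr V N E lf u v w') ?D \<subseteq> parts_met (Tr V N E lf u v w') C"
      using meets by (rule parts_met_move_into_subset)
    then have "card (parts_met (Tr V N E lf u v w') ?D) \<le> card (parts_met (Tr V N E lf u v w') C)"
      by (rule card_mono[rotated]) (simp add: parts_met_def)
    then show "w' \<in> ?S C" using w' met by (simp add: intersects_node_iff_parts_met)
  qed
  moreover have "w \<in> ?S C"
  proof -
    have "?X \<subseteq> V" unfolding Tr_def by blast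
    then have "2 \<le> card (parts_met ?X C)" by (rule two_le_card_parts_met[OF tri i _ meets not_sub])
    then show ?thesis using w by (simp add: intersects_node_iff_parts_met)
  qed
  moreover have "w \<notin> ?S ?D"
  proof -
    have "card (parts_met ?X ?D) \<le> 1" by (rule card_parts_met_move_into_inside) simp
    then show ?thesis by (simp add: intersects_node_iff_parts_met)
  qed
  ultimately have "?S ?D \<subset> ?S C" by blast
  moreover have "finite N" using T unfolding is_tree_def by blast
  then have "finite (?S C)" by simp
  ultimately show ?thesis unfolding num_intersected_def by (rule psubset_card_mono[rotated])
qed

lemma global_T_improvement_part_less:
  assumes cf: "connectivity_function V f" and T: "is_tree N E" and uv: "{u, v} \<in> E"
    and glob: "global_T_improvement V f N E lf u v C"
    and i: "i \<in> {1,2,3}" and w: "w \<in> N"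
    and meets: "Tr V N E lf u v w \<inter> C i \<noteq> {}" and not_sub: "\<not> Tr V N E lf u v w \<subseteq> C i"
  shows "f (Tr V N E lf u v w \<inter> C i) < f (Tr V N E lf u v w)"
proof (rule ccontr)
  let ?X = "Tr V N E lf u v w"
  let ?W = "Tside V N E lf u v"
  assume "\<not> f (?X \<inter> C i) < f ?X"
  then have le_i: "f ?X \<le> f (C i \<inter> ?X)" by (simp add: Int_commute)
  note edge = tree_edge_adj[OF T uv]
  have min: "min_improvement V f ?W C"
    using glob unfolding global_T_improvement_def T_improvement_def by blast
  have tri: "tripartition V C" using min unfolding min_improvement_def improvement_def by blast
  have X: "?X \<subseteq> V" unfolding Tr_def by blast
  have side: "?X \<subseteq> ?W \<or> ?X \<subseteq> V - ?W" by (rule Tr_subset_Tside_or_compl[OF T edge w])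
  have meets': "C i \<inter> ?X \<noteq> {}" using meets by blast
  have "\<forall>n\<in>{1,2,3}. n \<noteq> i \<longrightarrow> f ?X \<le> f (?X - C n)"
    using min_improvement_Diff_part_ge[OF cf min X side i _ _ meets' le_i] by blast
  then have "min_improvement V f ?W (move_into C i ?X)"
    by (rule min_improvement_move_into(1)[OF cf min X side i meets' le_i])
  then have "num_intersected V N E lf u v C \<le> num_intersected V N E lf u v (move_into C i ?X)"
    using glob uv unfolding global_T_improvement_def T_improvement_def by blast
  then show False
    using num_intersected_move_into_less[OF T edge tri i w meets not_sub] by simp
qed

theorem theorem6:
  fixes V :: "'a set" and f :: "'a set \<Rightarrow> nat"
    and N :: "'n set" and E :: "'n set set" and lf :: "'a \<Rightarrow> 'n"
    and u v :: 'n and C :: "nat \<Rightarrow> 'a set"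
  assumes "connectivity_function V f"
    and "branch_decomposition V N E lf"
    and "{u, v} \<in> E"
    and "global_T_improvement V f N E lf u v C"
  shows "\<forall>i\<in>{1,2,3}. \<forall>w\<in>N.
           f (Tr V N E lf u v w \<inter> C i) \<le> f (Tr V N E lf u v w) \<and>
           (Tr V N E lf u v w \<inter> C i \<noteq> {} \<longrightarrow>
              (f (Tr V N E lf u v w \<inter> C i) = f (Tr V N E lf u v w) \<longleftrightarrow>
               Tr V N E lf u v w \<subseteq> C i))"
proof (intro ballI)
  fix i :: nat and w assume i: "i \<in> {1,2,3}" and w: "w \<in> N"
  let ?X = "Tr V N E lf u v w"
  have T: "is_tree N E" using assms(2) unfolding branch_decomposition_def by blast
  consider "?X \<subseteq> C i" | "?X \<inter> C i = {}" | "?X \<inter> C i \<noteq> {}" "\<not> ?X \<subseteq> C i" by blast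
  then show "f (?X \<inter> C i) \<le> f ?X \<and> (?X \<inter> C i \<noteq> {} \<longrightarrow> (f (?X \<inter> C i) = f ?X \<longleftrightarrow> ?X \<subseteq> C i))"
  proof cases
    case 1
    then show ?thesis by (simp add: Int_absorb2)
  next
    case 2
    then show ?thesis using assms(1) unfolding connectivity_function_def by simp
  next
    case 3
    then show ?thesis using global_T_improvement_part_less[OF assms(1) T assms(3,4) i w] by simp
  qed
qed

end
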